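(* Let $H$ be a separable complex Hilbert space, let $\{v_j\}_{j\in\mathbb N}$ be an orthonormal basis of $H$, let $\{w_j\}_{j\in\mathbb N}$ be a set of unit vectors in $H$, and fix $N\ge 1$. Let $\mathcal B_N=\{w_j\}_{1\le j\le N}\cup\{v_j\}_{j\ge N+1}$, let $H_N'=\operatorname{span}\{v_1,\dots,v_N\}$, and let $p_N'$ denote the orthogonal projection of $H$ onto $H_N'$. Then the following are equivalent: (a) $\mathcal B_N$ is a frame of $H$; (b) the set $\{p_N'(w_1),\dots,p_N'(w_N)\}$ spans $H_N'$; (c) the set $\{p_N'(w_1),\dots,p_N'(w_N)\}$ is linearly independent; (d) $\mathcal B_N$ is a Riesz sequence in $H$; (e) $\mathcal B_N$ is a Riesz basis of $H$.
   Context: A sequence $\{u_j\}$ in $H$ is a frame if there are constants $0<A\le B<\infty$ with $A\|f\|^2\le\sum_j|\langle f,u_j\rangle|^2\le B\|f\|^2$ for all $f\in H$. It is a Riesz sequence if there are constants $0<A\le B<\infty$ with $A\sum_{j\in J}|a_j|^2\le\|\sum_{j\in J}a_ju_j\|^2\le B\sum_{j\in J}|a_j|^2$ for every finite set of coefficients $\{a_j\}_{j\in J}\subset\mathbb C$. A Riesz basis is a sequence that is both a frame and a Riesz sequence. *)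

theory Defs
  imports "HOL-Analysis.Analysis"
begin

class complex_inner = real_normed_vector +
  fixes scaleC :: "complex \<Rightarrow> 'a \<Rightarrow> 'a" (infixr \<open>*\<^sub>C\<close> 75)
    and cinner :: "'a \<Rightarrow> 'a \<Rightarrow> complex"
  assumes scaleC_add_right: "a *\<^sub>C (x + y) = a *\<^sub>C x + a *\<^sub>C y"
    and scaleC_add_left: "(a + b) *\<^sub>C x = a *\<^sub>C x + b *\<^sub>C x"
    and scaleC_scaleC: "a *\<^sub>C (b *\<^sub>C x) = (a * b) *\<^sub>C x"
    and scaleC_one: "1 *\<^sub>C x = x"
    and scaleR_scaleC: "scaleR r x = complex_of_real r *\<^sub>C x"
    and cinner_commute: "cinner x y = cnj (cinner y x)"
    and cinner_add_left: "cinner (x + y) z = cinner x z + cinner y z"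
    and cinner_scaleC_left: "cinner (a *\<^sub>C x) y = a * cinner x y"
    and cinner_norm: "cinner x x = complex_of_real ((norm x)\<^sup>2)"

class complex_hilbert = complex_inner + complete_space

interpretation cvs: vector_space "scaleC :: complex \<Rightarrow> 'a::complex_inner \<Rightarrow> 'a"
  by unfold_locales (simp_all add: scaleC_add_right scaleC_add_left scaleC_scaleC scaleC_one)

abbreviation cspan :: "'a::complex_inner set \<Rightarrow> 'a set" where
  "cspan \<equiv> module.span scaleC"

abbreviation cindependent :: "'a::complex_inner set \<Rightarrow> bool" where
  "cindependent S \<equiv> \<not> module.dependent scaleC S"

definition orthonormal_basis :: "(nat \<Rightarrow> 'a::complex_inner) \<Rightarrow> bool" where
  "orthonormal_basis v \<longleftrightarrow>
     (\<forall>i j. cinner (v i) (v j) = (if i = j then 1 else 0)) \<and>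
     closure (cspan (range v)) = UNIV"

definition orth_proj :: "'a::complex_inner set \<Rightarrow> 'a \<Rightarrow> 'a" where
  "orth_proj S x = (THE y. y \<in> S \<and> (\<forall>z\<in>S. cinner (x - y) z = 0))"

definition is_frame :: "(nat \<Rightarrow> 'a::complex_inner) \<Rightarrow> bool" where
  "is_frame u \<longleftrightarrow> (\<exists>A B. 0 < A \<and> A \<le> B \<and>
     (\<forall>f. summable (\<lambda>j. (cmod (cinner f (u j)))\<^sup>2) \<and>
          A * (norm f)\<^sup>2 \<le> (\<Sum>j. (cmod (cinner f (u j)))\<^sup>2) \<and>
          (\<Sum>j. (cmod (cinner f (u j)))\<^sup>2) \<le> B * (norm f)\<^sup>2))"

definition is_riesz_sequence :: "(nat \<Rightarrow> 'a::complex_inner) \<Rightarrow> bool" where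
  "is_riesz_sequence u \<longleftrightarrow> (\<exists>A B. 0 < A \<and> A \<le> B \<and>
     (\<forall>J a. finite J \<longrightarrow>
        A * (\<Sum>j\<in>J. (cmod (a j))\<^sup>2) \<le> (norm (\<Sum>j\<in>J. a j *\<^sub>C u j))\<^sup>2 \<and>
        (norm (\<Sum>j\<in>J. a j *\<^sub>C u j))\<^sup>2 \<le> B * (\<Sum>j\<in>J. (cmod (a j))\<^sup>2)))"

definition is_riesz_basis :: "(nat \<Rightarrow> 'a::complex_inner) \<Rightarrow> bool" where
  "is_riesz_basis u \<longleftrightarrow> is_frame u \<and> is_riesz_sequence u"

end

theory Submission
  imports Defs
begin

text \<open>
  Write P for the orthogonal projection onto H' = span {v_j | j < N}. Parseval's identity for the
  basis v gives, for every f,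
    sum_j |<f, B_j>|^2 = sum_(j<N) |<f, w_j>|^2 + ||f - P f||^2,
  and for a finite combination x = sum_j a_j B_j the tail sum_(j>=N) a_j v_j is orthogonal to H',
  so P x = sum_(j<N) a_j P w_j. The upper frame and Riesz bounds are automatic because every B_j
  is a unit vector. Hence the lower frame bound reduces to the finite-dimensional frame inequality
  for P w_0, ..., P w_(N-1) in H', which holds exactly when these vectors span H', and the lower
  Riesz bound reduces to the finite-dimensional Riesz inequality for the same vectors, which holds
  exactly when they are linearly independent. For N vectors in the N-dimensional space H' the two
  conditions coincide. Conversely, if the P w_j do not span H', a nonzero g in H' is orthogonal to
  the whole family; and if they are dependent, some X = sum_(j<N) a_j w_j with a nonzero
  coefficient is orthogonal to H', hence approximated by combinations of the v_k with k >= N,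
  which violates the lower Riesz bound.
\<close>

section \<open>Complex inner products\<close>

lemma cinner_add_right: "cinner x (y + z) = cinner x y + cinner (x::'a::complex_inner) z"
  by (metis cinner_commute cinner_add_left complex_cnj_add)

lemma cinner_scaleC_right: "cinner x (c *\<^sub>C y) = cnj c * cinner (x::'a::complex_inner) y"
  by (metis cinner_commute cinner_scaleC_left complex_cnj_mult)

lemma cinner_zero_left [simp]: "cinner 0 (x::'a::complex_inner) = 0"
  by (metis add_cancel_right_left cinner_add_left)

lemma cinner_zero_right [simp]: "cinner (x::'a::complex_inner) 0 = 0"
  by (metis cinner_commute cinner_zero_left complex_cnj_zero)

lemma cinner_eq_zero_commute: "cinner x y = 0 \<longleftrightarrow> cinner y (x::'a::complex_inner) = 0"
  by (metis cinner_commute complex_cnj_zero_iff)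

lemma cinner_diff_left: "cinner (x - y) (z::'a::complex_inner) = cinner x z - cinner y z"
  using cinner_add_left[of "x - y" y z] by simp

lemma cinner_diff_right: "cinner x (y - (z::'a::complex_inner)) = cinner x y - cinner x z"
  by (metis cinner_commute cinner_diff_left complex_cnj_diff)

lemma cinner_sum_left: "cinner (\<Sum>i\<in>I. f i) (y::'a::complex_inner) = (\<Sum>i\<in>I. cinner (f i) y)"
  by (induction I rule: infinite_finite_induct) (auto simp: cinner_add_left)

lemma cinner_sum_right: "cinner y (\<Sum>i\<in>I. f i) = (\<Sum>i\<in>I. cinner (y::'a::complex_inner) (f i))"
  by (induction I rule: infinite_finite_induct) (auto simp: cinner_add_right)

lemma cinner_self_eq_zero [simp]: "cinner x x = 0 \<longleftrightarrow> (x::'a::complex_inner) = 0"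
  by (simp add: cinner_norm)

lemma norm_scaleC: "norm (c *\<^sub>C (x::'a::complex_inner)) = cmod c * norm x"
proof -
  have "complex_of_real ((norm (c *\<^sub>C x))\<^sup>2) = c * cnj c * complex_of_real ((norm x)\<^sup>2)"
    by (metis cinner_norm cinner_scaleC_left cinner_scaleC_right mult.assoc)
  also have "c * cnj c = complex_of_real ((cmod c)\<^sup>2)"
    by (simp add: complex_norm_square[symmetric])
  finally have "(norm (c *\<^sub>C x))\<^sup>2 = (cmod c * norm x)\<^sup>2"
    by (metis of_real_eq_iff of_real_mult power_mult_distrib)
  then show ?thesis
    by (simp add: power2_eq_iff_nonneg)
qed

lemma norm_add_Pythagorean_cinner:
  assumes "cinner x y = 0"
  shows "(norm (x + y))\<^sup>2 = (norm x)\<^sup>2 + (norm (y::'a::complex_inner))\<^sup>2"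
proof -
  have "cinner (x + y) (x + y) = cinner x x + cinner y y"
    using assms cinner_eq_zero_commute[of x y] by (simp add: cinner_add_left cinner_add_right)
  then show ?thesis
    by (metis cinner_norm of_real_add of_real_eq_iff)
qed

lemma cinner_cauchy_schwarz: "cmod (cinner x y) \<le> norm x * norm (y::'a::complex_inner)"
proof (cases "y = 0")
  case False
  define t where "t = cinner x y / cinner y y"
  have "cinner (x - t *\<^sub>C y) (t *\<^sub>C y) = 0"
    using False by (simp add: cinner_diff_left cinner_scaleC_left cinner_scaleC_right t_def)
  then have "(norm x)\<^sup>2 = (norm (x - t *\<^sub>C y))\<^sup>2 + (norm (t *\<^sub>C y))\<^sup>2"
    by (metis norm_add_Pythagorean_cinner diff_add_cancel)
  then have "(norm (t *\<^sub>C y))\<^sup>2 \<le> (norm x)\<^sup>2"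
    by (metis le_add_same_cancel2 zero_le_power2)
  then have "norm (t *\<^sub>C y) \<le> norm x"
    using power2_le_imp_le norm_ge_zero by blast
  moreover have "cmod t = cmod (cinner x y) / (norm y)\<^sup>2"
    unfolding t_def cinner_norm norm_divide norm_of_real by simp
  ultimately have "cmod (cinner x y) / (norm y)\<^sup>2 * norm y \<le> norm x"
    by (simp add: norm_scaleC)
  then show ?thesis
    using False by (simp add: power2_eq_square pos_divide_le_eq)
qed simp

lemma cmod_sum_mult_square_le:
  "(cmod (\<Sum>i\<in>I. a i * b i))\<^sup>2 \<le> (\<Sum>i\<in>I. (cmod (a i))\<^sup>2) * (\<Sum>i\<in>I. (cmod (b i))\<^sup>2)"
proof -
  have "cmod (\<Sum>i\<in>I. a i * b i) \<le> (\<Sum>i\<in>I. cmod (a i) * cmod (b i))"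
    by (rule order_trans[OF norm_sum]) (simp add: norm_mult)
  then have "(cmod (\<Sum>i\<in>I. a i * b i))\<^sup>2 \<le> (\<Sum>i\<in>I. cmod (a i) * cmod (b i))\<^sup>2"
    by (simp add: power_mono)
  also have "\<dots> \<le> (\<Sum>i\<in>I. (cmod (a i))\<^sup>2) * (\<Sum>i\<in>I. (cmod (b i))\<^sup>2)"
    by (rule Cauchy_Schwarz_ineq_sum)
  finally show ?thesis .
qed

lemma norm_sum_unit_square_le:
  assumes "\<And>i. i \<in> I \<Longrightarrow> norm (u i) = 1"
  shows "(norm (\<Sum>i\<in>I. c i *\<^sub>C (u i::'a::complex_inner)))\<^sup>2 \<le> card I * (\<Sum>i\<in>I. (cmod (c i))\<^sup>2)"
proof -
  have "norm (\<Sum>i\<in>I. c i *\<^sub>C u i) \<le> (\<Sum>i\<in>I. cmod (c i))"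
    by (rule order_trans[OF norm_sum]) (simp add: norm_scaleC assms)
  then have "(norm (\<Sum>i\<in>I. c i *\<^sub>C u i))\<^sup>2 \<le> (\<Sum>i\<in>I. cmod (c i))\<^sup>2"
    by (simp add: power_mono)
  also have "\<dots> \<le> card I * (\<Sum>i\<in>I. (cmod (c i))\<^sup>2)"
    using sum_squared_le_sum_of_squares[of "\<lambda>i. cmod (c i)" I] by (simp add: mult.commute)
  finally show ?thesis .
qed

lemma sum_square_le_twice: "(a + b)\<^sup>2 \<le> 2 * a\<^sup>2 + 2 * (b::real)\<^sup>2"
  using zero_le_power2[of "a - b"] unfolding power2_sum power2_diff by linarith

lemma norm_add_square_le: "(norm (x + y))\<^sup>2 \<le> 2 * (norm x)\<^sup>2 + 2 * (norm y)\<^sup>2"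
proof -
  have "(norm (x + y))\<^sup>2 \<le> (norm x + norm y)\<^sup>2"
    by (rule power_mono[OF norm_triangle_ineq norm_ge_zero])
  also have "\<dots> \<le> 2 * (norm x)\<^sup>2 + 2 * (norm y)\<^sup>2"
    by (rule sum_square_le_twice)
  finally show ?thesis .
qed

section \<open>Finite orthonormal sets\<close>

definition corthonormal :: "'a::complex_inner set \<Rightarrow> bool" where
  "corthonormal E \<longleftrightarrow> (\<forall>e\<in>E. \<forall>e'\<in>E. cinner e e' = (if e = e' then 1 else 0))"

definition orthonormal_proj :: "'a::complex_inner set \<Rightarrow> 'a \<Rightarrow> 'a" where
  "orthonormal_proj E x = (\<Sum>e\<in>E. cinner x e *\<^sub>C e)"

lemma orthonormal_proj_in_cspan: "orthonormal_proj E x \<in> cspan E"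
  unfolding orthonormal_proj_def by (intro cvs.span_sum cvs.span_scale cvs.span_base)

lemma orthonormal_proj_lincomb:
  "orthonormal_proj E (\<Sum>i\<in>I. c i *\<^sub>C x i) = (\<Sum>i\<in>I. c i *\<^sub>C orthonormal_proj E (x i))"
proof -
  have "orthonormal_proj E (\<Sum>i\<in>I. c i *\<^sub>C x i) = (\<Sum>e\<in>E. \<Sum>i\<in>I. (c i * cinner (x i) e) *\<^sub>C e)"
    unfolding orthonormal_proj_def by (simp add: cinner_sum_left cinner_scaleC_left cvs.scale_sum_left)
  also have "\<dots> = (\<Sum>i\<in>I. \<Sum>e\<in>E. (c i * cinner (x i) e) *\<^sub>C e)"
    by (rule sum.swap)
  also have "\<dots> = (\<Sum>i\<in>I. c i *\<^sub>C orthonormal_proj E (x i))"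
    unfolding orthonormal_proj_def by (simp add: cvs.scale_sum_right scaleC_scaleC)
  finally show ?thesis .
qed

lemma cinner_cspan_eq_zero:
  assumes "\<And>e. e \<in> E \<Longrightarrow> cinner x e = 0" and "y \<in> cspan E"
  shows "cinner x (y::'a::complex_inner) = 0"
  using assms(2)
proof (induction rule: cvs.span_induct_alt)
  case (step c e y)
  then show ?case
    using assms(1) by (simp add: cinner_add_right cinner_scaleC_right)
qed simp

context
  fixes E :: "'a::complex_inner set"
  assumes fin: "finite E" and orth: "corthonormal E"
begin

lemma cinner_sum_orthonormal:
  assumes "e \<in> E"
  shows "cinner (\<Sum>e'\<in>E. c e' *\<^sub>C e') e = c e"
proof -
  have "cinner (\<Sum>e'\<in>E. c e' *\<^sub>C e') e = (\<Sum>e'\<in>E. if e' = e then c e else 0)"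
    using orth assms unfolding corthonormal_def
    by (auto simp: cinner_sum_left cinner_scaleC_left intro: sum.cong)
  then show ?thesis
    using fin assms by simp
qed

lemma norm_sum_orthonormal_square:
  "(norm (\<Sum>e\<in>E. c e *\<^sub>C e))\<^sup>2 = (\<Sum>e\<in>E. (cmod (c e))\<^sup>2)"
proof -
  let ?s = "\<Sum>e\<in>E. c e *\<^sub>C e"
  have "cinner ?s ?s = (\<Sum>e\<in>E. c e * cnj (c e))"
    by (simp add: cinner_sum_right cinner_scaleC_right cinner_sum_orthonormal mult.commute)
  also have "\<dots> = complex_of_real (\<Sum>e\<in>E. (cmod (c e))\<^sup>2)"
    by (simp only: of_real_sum complex_norm_square)
  finally show ?thesis
    by (simp only: cinner_norm of_real_eq_iff)
qed

lemma cinner_orthonormal_proj: "e \<in> E \<Longrightarrow> cinner (orthonormal_proj E x) e = cinner x e"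
  unfolding orthonormal_proj_def by (rule cinner_sum_orthonormal)

lemma orthonormal_proj_orthogonal:
  assumes "y \<in> cspan E"
  shows "cinner (x - orthonormal_proj E x) y = 0"
  by (rule cinner_cspan_eq_zero[OF _ assms]) (simp add: cinner_diff_left cinner_orthonormal_proj)

lemma cinner_orthonormal_proj_right:
  assumes "y \<in> cspan E"
  shows "cinner y (orthonormal_proj E x) = cinner y x"
proof -
  have "cinner y (x - orthonormal_proj E x) = 0"
    using orthonormal_proj_orthogonal[OF assms] by (metis cinner_commute complex_cnj_zero)
  then show ?thesis
    by (simp add: cinner_diff_right)
qed

lemma norm_orthonormal_proj_square:
  "(norm (orthonormal_proj E x))\<^sup>2 = (\<Sum>e\<in>E. (cmod (cinner x e))\<^sup>2)"
  unfolding orthonormal_proj_def by (rule norm_sum_orthonormal_square)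

lemma norm_square_orthonormal_proj_split:
  "(norm x)\<^sup>2 = (norm (x - orthonormal_proj E x))\<^sup>2 + (norm (orthonormal_proj E x))\<^sup>2"
  using norm_add_Pythagorean_cinner[OF orthonormal_proj_orthogonal[OF orthonormal_proj_in_cspan, of x x]] by simp

lemma orthonormal_proj_best:
  assumes "y \<in> cspan E"
  shows "norm (x - orthonormal_proj E x) \<le> norm (x - y)"
proof -
  have "orthonormal_proj E x - y \<in> cspan E"
    using assms orthonormal_proj_in_cspan cvs.span_diff by blast
  from norm_add_Pythagorean_cinner[OF orthonormal_proj_orthogonal[OF this, of x]]
  have "(norm (x - y))\<^sup>2 = (norm (x - orthonormal_proj E x))\<^sup>2 + (norm (orthonormal_proj E x - y))\<^sup>2"
    by simp
  then have "(norm (x - orthonormal_proj E x))\<^sup>2 \<le> (norm (x - y))\<^sup>2"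
    by simp
  then show ?thesis
    using power2_le_imp_le norm_ge_zero by blast
qed

lemma orthonormal_proj_eq_self:
  assumes "y \<in> cspan E"
  shows "orthonormal_proj E y = y"
proof -
  have "y - orthonormal_proj E y \<in> cspan E"
    using assms orthonormal_proj_in_cspan cvs.span_diff by blast
  then have "cinner (y - orthonormal_proj E y) (y - orthonormal_proj E y) = 0"
    by (rule orthonormal_proj_orthogonal)
  then show ?thesis
    by simp
qed

lemma orth_proj_cspan: "orth_proj (cspan E) = orthonormal_proj E"
proof
  fix x
  show "orth_proj (cspan E) x = orthonormal_proj E x"
    unfolding orth_proj_def
  proof (rule the_equality)
    fix y assume y: "y \<in> cspan E \<and> (\<forall>z\<in>cspan E. cinner (x - y) z = 0)"
    then have d: "y - orthonormal_proj E x \<in> cspan E"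
      using orthonormal_proj_in_cspan cvs.span_diff by blast
    have "cinner (y - orthonormal_proj E x) (y - orthonormal_proj E x)
        = cinner (x - orthonormal_proj E x) (y - orthonormal_proj E x) - cinner (x - y) (y - orthonormal_proj E x)"
      using cinner_diff_left[of "x - orthonormal_proj E x" "x - y" "y - orthonormal_proj E x"] by simp
    also have "\<dots> = 0"
      using y d orthonormal_proj_orthogonal[OF d] by simp
    finally show "y = orthonormal_proj E x"
      by simp
  next
    show "orthonormal_proj E x \<in> cspan E \<and> (\<forall>z\<in>cspan E. cinner (x - orthonormal_proj E x) z = 0)"
      by (intro conjI ballI orthonormal_proj_in_cspan orthonormal_proj_orthogonal)
  qed
qed

lemma corthonormal_independent: "cindependent E"
proof
  assume "cvs.dependent E"
  then obtain u e where "e \<in> E" "u e \<noteq> 0" "(\<Sum>e'\<in>E. u e' *\<^sub>C e') = 0"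
    using cvs.dependent_finite[OF fin] by blast
  then show False
    using cinner_sum_orthonormal[of e u] by simp
qed

end

section \<open>Finite families of vectors\<close>

lemma gram_schmidt:
  assumes "finite S"
  shows "\<exists>E. finite E \<and> corthonormal E \<and> cspan E = cspan (S::'a::complex_inner set)"
  using assms
proof (induction S rule: finite_induct)
  case empty
  show ?case
    by (rule exI[of _ "{}"]) (simp add: corthonormal_def)
next
  case (insert s F)
  then obtain E where E: "finite E" "corthonormal E" "cspan E = cspan F"
    by blast
  define r where "r = s - orthonormal_proj E s"
  show ?case
  proof (cases "r = 0")
    case True
    then have "s \<in> cspan F"
      using orthonormal_proj_in_cspan[of E s] E(3) by (simp add: r_def)
    then show ?thesis
      using E cvs.span_redundant by metis
  next
    case False
    define e where "e = complex_of_real (1 / norm r) *\<^sub>C r"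
    have r_orth: "cinner r e' = 0" if "e' \<in> E" for e'
      unfolding r_def using orthonormal_proj_orthogonal[OF E(1,2) cvs.span_base[OF that]] .
    have "norm e = 1"
      using False by (simp add: e_def norm_scaleC norm_divide)
    then have "cinner e e = 1"
      by (simp add: cinner_norm)
    moreover have "cinner e e' = 0" "cinner e' e = 0" if "e' \<in> E" for e'
      using r_orth[OF that] cinner_eq_zero_commute[of r e']
      by (simp_all add: e_def cinner_scaleC_left cinner_scaleC_right)
    ultimately have "corthonormal (insert e E)"
      using E(2) unfolding corthonormal_def by auto
    moreover have "cspan (insert e E) = cspan (insert s F)"
      unfolding cvs.span_eq
    proof (intro conjI insert_subsetI)
      have sF: "cspan F \<subseteq> cspan (insert s F)" and eE: "cspan E \<subseteq> cspan (insert e E)"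
        by (simp_all add: cvs.span_mono subset_insertI)
      have "s = complex_of_real (norm r) *\<^sub>C e + orthonormal_proj E s"
        using False by (simp add: e_def r_def scaleC_scaleC)
      moreover have "e \<in> cspan (insert e E)" "orthonormal_proj E s \<in> cspan (insert e E)"
        using eE orthonormal_proj_in_cspan by (auto intro: cvs.span_base)
      ultimately show "s \<in> cspan (insert e E)"
        by (metis cvs.span_add cvs.span_scale)
      have "s \<in> cspan (insert s F)" "orthonormal_proj E s \<in> cspan (insert s F)"
        using sF E(3) orthonormal_proj_in_cspan by (auto intro: cvs.span_base)
      then show "e \<in> cspan (insert s F)"
        unfolding e_def r_def by (intro cvs.span_scale cvs.span_diff)
      show "E \<subseteq> cspan (insert s F)" "F \<subseteq> cspan (insert e E)"
        using sF eE E(3) cvs.span_superset by blast+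
    qed
    ultimately show ?thesis
      using E(1) by blast
  qed
qed

lemma exists_orthogonal_in_cspan_insert:
  assumes "finite S" and "x \<notin> cspan S"
  obtains g where "g \<noteq> 0" "g \<in> cspan (insert x S)" "\<And>s. s \<in> S \<Longrightarrow> cinner g s = 0"
proof -
  obtain E where E: "finite E" "corthonormal E" "cspan E = cspan (S::'a::complex_inner set)"
    using gram_schmidt[OF assms(1)] by blast
  define g where "g = x - orthonormal_proj E x"
  have "g \<noteq> 0"
    using assms(2) orthonormal_proj_in_cspan[of E x] E(3) by (auto simp: g_def)
  moreover have "cspan E \<subseteq> cspan (insert x S)"
    using E(3) by (simp add: cvs.span_mono subset_insertI)
  then have "g \<in> cspan (insert x S)"
    unfolding g_def using orthonormal_proj_in_cspan by (blast intro: cvs.span_diff cvs.span_base)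
  moreover have "cinner g s = 0" if "s \<in> S" for s
    unfolding g_def using orthonormal_proj_orthogonal[OF E(1,2)] E(3) cvs.span_base[OF that] by blast
  ultimately show ?thesis
    using that by blast
qed

lemma cspan_image_iff_lincomb:
  assumes "finite I"
  shows "y \<in> cspan (s ` I) \<longleftrightarrow> (\<exists>c. y = (\<Sum>i\<in>I. c i *\<^sub>C (s i::'a::complex_inner)))"
proof
  assume "y \<in> cspan (s ` I)"
  then show "\<exists>c. y = (\<Sum>i\<in>I. c i *\<^sub>C s i)"
  proof (induction rule: cvs.span_induct_alt)
    case base
    show ?case
      by (rule exI[of _ "\<lambda>_. 0"]) simp
  next
    case (step k x y)
    then obtain i c where "i \<in> I" "x = s i" "y = (\<Sum>j\<in>I. c j *\<^sub>C s j)"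
      by blast
    then have "k *\<^sub>C x + y = (\<Sum>j\<in>I. (c j + (if j = i then k else 0)) *\<^sub>C s j)"
      using assms
      by (simp add: scaleC_add_left sum.distrib if_distrib[of "\<lambda>a. a *\<^sub>C _"] add.commute cong: if_cong)
    then show ?case
      by (rule exI[of _ "\<lambda>j. c j + (if j = i then k else 0)"])
  qed
qed (auto intro: cvs.span_sum cvs.span_scale cvs.span_base)

lemma inj_independent_iff_lincomb_eq_zero:
  assumes "finite I"
  shows "inj_on s I \<and> cindependent (s ` I) \<longleftrightarrow>
    (\<forall>c. (\<Sum>i\<in>I. c i *\<^sub>C (s i::'a::complex_inner)) = 0 \<longrightarrow> (\<forall>i\<in>I. c i = 0))"
proof (intro iffI allI impI ballI)
  fix c i
  assume indep: "inj_on s I \<and> cindependent (s ` I)" and zero: "(\<Sum>i\<in>I. c i *\<^sub>C s i) = 0"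
    and i: "i \<in> I"
  define u where "u x = c (the_inv_into I s x)" for x
  have "(\<Sum>x\<in>s ` I. u x *\<^sub>C x) = 0"
    using indep zero by (simp add: sum.reindex u_def the_inv_into_f_f)
  then have "u (s i) = 0"
    using indep i cvs.dependent_finite[OF finite_imageI[OF assms], of s] by blast
  then show "c i = 0"
    using i indep by (simp add: u_def the_inv_into_f_f)
next
  assume zero: "\<forall>c. (\<Sum>i\<in>I. c i *\<^sub>C s i) = 0 \<longrightarrow> (\<forall>i\<in>I. c i = 0)"
  show "inj_on s I \<and> cindependent (s ` I)"
  proof
    show inj: "inj_on s I"
    proof (rule inj_onI, rule ccontr)
      fix i j assume ij: "i \<in> I" "j \<in> I" "s i = s j" "i \<noteq> j"
      define c where "c k = (if k = i then 1 else 0) - (if k = j then 1 else (0::complex))" for k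
      have "(\<Sum>k\<in>I. c k *\<^sub>C s k) = s i - s j"
        using assms ij(1,2,4)
        by (simp add: c_def cvs.scale_left_diff_distrib sum_subtractf if_distrib[of "\<lambda>a. a *\<^sub>C _"]
            cong: if_cong)
      then have "c i = 0"
        using zero ij(1,3) by simp
      then show False
        using ij(4) by (simp add: c_def)
    qed
    show "cindependent (s ` I)"
    proof
      assume "cvs.dependent (s ` I)"
      then obtain u x where x: "x \<in> s ` I" "u x \<noteq> 0" and "(\<Sum>y\<in>s ` I. u y *\<^sub>C y) = 0"
        using cvs.dependent_finite assms by blast
      then have "(\<Sum>i\<in>I. u (s i) *\<^sub>C s i) = 0"
        using inj by (simp add: sum.reindex)
      then have "\<forall>i\<in>I. u (s i) = 0"
        using zero[rule_format, of "\<lambda>i. u (s i)"] by blast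
      then show False
        using x by blast
    qed
  qed
qed

lemma cspan_eq_iff_inj_independent:
  fixes s :: "'b \<Rightarrow> 'a::complex_inner"
  assumes E: "finite E" "cindependent E" and I: "finite I" "card I = card E"
    and sub: "s ` I \<subseteq> cspan E"
  shows "cspan (s ` I) = cspan E \<longleftrightarrow> inj_on s I \<and> cindependent (s ` I)"
proof
  assume "cspan (s ` I) = cspan E"
  then have E_sub: "E \<subseteq> cspan (s ` I)"
    using cvs.span_superset by blast
  obtain B where B: "B \<subseteq> s ` I" "cindependent B" "s ` I \<subseteq> cspan B"
    by (rule cvs.maximal_independent_subset)
  have finB: "finite B"
    using B(1) I(1) finite_subset by blast
  have "E \<subseteq> cspan B"
    using E_sub cvs.span_minimal[OF B(3) cvs.subspace_span] by blast
  then have "card E \<le> card B"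
    using cvs.independent_span_bound[OF finB E(2)] by blast
  moreover have "card B \<le> card (s ` I)"
    using B(1) I(1) by (simp add: card_mono)
  moreover have "card (s ` I) \<le> card I"
    by (rule card_image_le[OF I(1)])
  ultimately have "card B = card (s ` I)" "card (s ` I) = card I"
    using I(2) by linarith+
  then show "inj_on s I \<and> cindependent (s ` I)"
    using B(1,2) I(1) by (metis card_subset_eq eq_card_imp_inj_on finite_imageI)
next
  assume indep: "inj_on s I \<and> cindependent (s ` I)"
  have "E \<subseteq> cspan (s ` I)"
  proof
    fix e assume "e \<in> E"
    show "e \<in> cspan (s ` I)"
    proof (rule ccontr)
      assume e: "e \<notin> cspan (s ` I)"
      then have "cindependent (insert e (s ` I))"
        using indep cvs.independent_insertI by blast
      moreover have "insert e (s ` I) \<subseteq> cspan E"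
        using sub \<open>e \<in> E\<close> cvs.span_base by blast
      ultimately have "card (insert e (s ` I)) \<le> card E"
        using cvs.independent_span_bound[OF E(1)] by blast
      moreover have "e \<notin> s ` I"
        using e cvs.span_base[of e "s ` I"] by auto
      then have "card (insert e (s ` I)) = card I + 1"
        using indep I(1) by (simp add: card_image)
      ultimately show False
        using I(2) by simp
    qed
  qed
  then show "cspan (s ` I) = cspan E"
    using sub cvs.span_eq by blast
qed

lemma orthonormal_basis_of_cspan_image:
  fixes s :: "'b \<Rightarrow> 'a::complex_inner"
  assumes "finite I"
  obtains E d where "finite E" "corthonormal E" "cspan E = cspan (s ` I)"
    "\<And>e. e \<in> E \<Longrightarrow> e = (\<Sum>i\<in>I. d e i *\<^sub>C s i)"
proof -
  obtain E where E: "finite E" "corthonormal E" "cspan E = cspan (s ` I)"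
    using gram_schmidt[OF finite_imageI[OF assms]] by blast
  have "\<forall>e\<in>E. \<exists>c. e = (\<Sum>i\<in>I. c i *\<^sub>C s i)"
    using E(3) cvs.span_base[of _ E] cspan_image_iff_lincomb[OF assms] by blast
  then obtain d where "\<And>e. e \<in> E \<Longrightarrow> e = (\<Sum>i\<in>I. d e i *\<^sub>C s i)"
    by metis
  with E that show ?thesis
    by blast
qed

lemma finite_family_frame_lower_bound:
  fixes s :: "'b \<Rightarrow> 'a::complex_inner"
  assumes "finite I"
  obtains C where "C > 0"
    "\<And>g. g \<in> cspan (s ` I) \<Longrightarrow> (norm g)\<^sup>2 \<le> C * (\<Sum>i\<in>I. (cmod (cinner g (s i)))\<^sup>2)"
proof -
  obtain E d where E: "finite E" "corthonormal E" "cspan E = cspan (s ` I)"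
    and d: "\<And>e. e \<in> E \<Longrightarrow> e = (\<Sum>i\<in>I. d e i *\<^sub>C s i)"
    using orthonormal_basis_of_cspan_image[OF assms] by blast
  define D where "D = (\<Sum>e\<in>E. \<Sum>i\<in>I. (cmod (d e i))\<^sup>2)"
  have "(norm g)\<^sup>2 \<le> (1 + D) * (\<Sum>i\<in>I. (cmod (cinner g (s i)))\<^sup>2)" if g: "g \<in> cspan (s ` I)" for g
  proof -
    let ?G = "\<Sum>i\<in>I. (cmod (cinner g (s i)))\<^sup>2"
    have "(cmod (cinner g e))\<^sup>2 \<le> (\<Sum>i\<in>I. (cmod (d e i))\<^sup>2) * ?G" if "e \<in> E" for e
    proof -
      have "cinner g e = (\<Sum>i\<in>I. cnj (d e i) * cinner g (s i))"
        by (subst d[OF that]) (simp add: cinner_sum_right cinner_scaleC_right)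
      then show ?thesis
        using cmod_sum_mult_square_le[of "\<lambda>i. cnj (d e i)" "\<lambda>i. cinner g (s i)" I] by simp
    qed
    then have "(\<Sum>e\<in>E. (cmod (cinner g e))\<^sup>2) \<le> D * ?G"
      unfolding D_def sum_distrib_right by (rule sum_mono)
    moreover have "(norm g)\<^sup>2 = (\<Sum>e\<in>E. (cmod (cinner g e))\<^sup>2)"
      using g E orthonormal_proj_eq_self[OF E(1,2)] norm_orthonormal_proj_square[OF E(1,2)] by metis
    moreover have "0 \<le> ?G"
      by (simp add: sum_nonneg)
    ultimately show ?thesis
      by (simp add: algebra_simps)
  qed
  moreover have "1 + D > 0"
    unfolding D_def by (simp add: add_pos_nonneg sum_nonneg)
  ultimately show ?thesis
    using that by blast
qed

lemma finite_family_riesz_lower_bound: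
  fixes s :: "'b \<Rightarrow> 'a::complex_inner"
  assumes "finite I" and "inj_on s I" and "cindependent (s ` I)"
  obtains C where "C > 0"
    "\<And>c. (\<Sum>i\<in>I. (cmod (c i))\<^sup>2) \<le> C * (norm (\<Sum>i\<in>I. c i *\<^sub>C s i))\<^sup>2"
proof -
  obtain E d where E: "finite E" "corthonormal E" "cspan E = cspan (s ` I)"
    and d: "\<And>e. e \<in> E \<Longrightarrow> e = (\<Sum>i\<in>I. d e i *\<^sub>C s i)"
    using orthonormal_basis_of_cspan_image[OF assms(1)] by blast
  define D where "D = (\<Sum>i\<in>I. \<Sum>e\<in>E. (cmod (d e i))\<^sup>2)"
  have "(\<Sum>i\<in>I. (cmod (c i))\<^sup>2) \<le> (1 + D) * (norm (\<Sum>i\<in>I. c i *\<^sub>C s i))\<^sup>2" for c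
  proof -
    define y where "y = (\<Sum>i\<in>I. c i *\<^sub>C s i)"
    have "y \<in> cspan E"
      unfolding y_def E(3) using cspan_image_iff_lincomb[OF assms(1)] by blast
    then have "y = (\<Sum>e\<in>E. cinner y e *\<^sub>C (\<Sum>i\<in>I. d e i *\<^sub>C s i))"
      using orthonormal_proj_eq_self[OF E(1,2)] d unfolding orthonormal_proj_def
      by (metis (no_types, lifting) sum.cong)
    also have "\<dots> = (\<Sum>i\<in>I. (\<Sum>e\<in>E. cinner y e * d e i) *\<^sub>C s i)"
      by (simp add: cvs.scale_sum_right cvs.scale_sum_left scaleC_scaleC sum.swap[of _ E])
    finally have "(\<Sum>i\<in>I. (c i - (\<Sum>e\<in>E. cinner y e * d e i)) *\<^sub>C s i) = 0"
      unfolding y_def by (simp add: cvs.scale_left_diff_distrib sum_subtractf)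
    moreover have zero: "\<forall>a. (\<Sum>i\<in>I. a i *\<^sub>C s i) = 0 \<longrightarrow> (\<forall>i\<in>I. a i = 0)"
      using inj_independent_iff_lincomb_eq_zero[OF assms(1)] assms(2,3) by blast
    ultimately have c: "c i = (\<Sum>e\<in>E. cinner y e * d e i)" if "i \<in> I" for i
      using zero[rule_format, of "\<lambda>i. c i - (\<Sum>e\<in>E. cinner y e * d e i)"] that by simp
    have "(cmod (c i))\<^sup>2 \<le> (norm y)\<^sup>2 * (\<Sum>e\<in>E. (cmod (d e i))\<^sup>2)" if "i \<in> I" for i
      using cmod_sum_mult_square_le[of "\<lambda>e. cinner y e" "\<lambda>e. d e i" E]
        norm_orthonormal_proj_square[OF E(1,2), of y] orthonormal_proj_eq_self[OF E(1,2) \<open>y \<in> cspan E\<close>]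
        c[OF that] by simp
    then have "(\<Sum>i\<in>I. (cmod (c i))\<^sup>2) \<le> (norm y)\<^sup>2 * D"
      unfolding D_def sum_distrib_left by (rule sum_mono)
    then show ?thesis
      unfolding y_def by (simp add: algebra_simps add_increasing)
  qed
  moreover have "1 + D > 0"
    unfolding D_def by (simp add: add_pos_nonneg sum_nonneg)
  ultimately show ?thesis
    using that by blast
qed

section \<open>Orthonormal bases\<close>

lemma cspan_range_subset_initial_segment:
  assumes "y \<in> cspan (range v)"
  obtains M where "y \<in> cspan (v ` {..<M::nat})"
proof -
  obtain t r where t: "finite t" "t \<subseteq> range v" and y: "y = (\<Sum>a\<in>t. r a *\<^sub>C a)"
    using assms unfolding cvs.span_explicit by blast
  obtain C where "finite C" "t = v ` C"
    using finite_subset_image[OF t] by blast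
  moreover obtain M where "C \<subseteq> {..<M}"
    using finite_nat_bounded[OF \<open>finite C\<close>] by blast
  ultimately have "t \<subseteq> v ` {..<M}"
    by blast
  then have "y \<in> cspan (v ` {..<M})"
    unfolding y by (intro cvs.span_sum cvs.span_scale) (auto intro: cvs.span_base)
  then show ?thesis
    by (rule that)
qed

context
  fixes v :: "nat \<Rightarrow> 'a::complex_inner"
  assumes onb: "orthonormal_basis v"
begin

lemma orthonormal_basis_cinner: "cinner (v i) (v j) = (if i = j then 1 else 0)"
  using onb unfolding orthonormal_basis_def by blast

lemma orthonormal_basis_inj: "inj v"
  by (rule injI) (metis orthonormal_basis_cinner zero_neq_one)

lemma corthonormal_image: "corthonormal (v ` I)"
  unfolding corthonormal_def using orthonormal_basis_cinner orthonormal_basis_inj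
  by (auto simp: inj_eq)

lemma orthonormal_proj_image:
  "orthonormal_proj (v ` I) x = (\<Sum>k\<in>I. cinner x (v k) *\<^sub>C v k)"
  unfolding orthonormal_proj_def
  by (simp add: sum.reindex inj_on_subset[OF orthonormal_basis_inj])

lemma norm_orthonormal_proj_image_square:
  assumes "finite I"
  shows "(norm (orthonormal_proj (v ` I) x))\<^sup>2 = (\<Sum>k\<in>I. (cmod (cinner x (v k)))\<^sup>2)"
  using norm_orthonormal_proj_square[OF finite_imageI[OF assms] corthonormal_image, of x]
  by (simp add: sum.reindex inj_on_subset[OF orthonormal_basis_inj])

lemma norm_lincomb_orthonormal_basis_square:
  assumes "finite I"
  shows "(norm (\<Sum>k\<in>I. c k *\<^sub>C v k))\<^sup>2 = (\<Sum>k\<in>I. (cmod (c k))\<^sup>2)"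
proof -
  define c' where "c' e = c (the_inv_into I v e)" for e
  have inj: "inj_on v I"
    using orthonormal_basis_inj inj_on_subset by blast
  then have "(\<Sum>k\<in>I. c k *\<^sub>C v k) = (\<Sum>e\<in>v ` I. c' e *\<^sub>C e)"
    by (simp add: sum.reindex c'_def the_inv_into_f_f)
  moreover have "(\<Sum>k\<in>I. (cmod (c k))\<^sup>2) = (\<Sum>e\<in>v ` I. (cmod (c' e))\<^sup>2)"
    using inj by (simp add: sum.reindex c'_def the_inv_into_f_f)
  ultimately show ?thesis
    using norm_sum_orthonormal_square[OF finite_imageI[OF assms] corthonormal_image]
    by simp
qed

lemma parseval_sums: "(\<lambda>k. (cmod (cinner f (v k)))\<^sup>2) sums (norm f)\<^sup>2"
  unfolding sums_def
proof (rule LIMSEQ_I)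
  fix r :: real assume "r > 0"
  have "f \<in> closure (cspan (range v))"
    using onb unfolding orthonormal_basis_def by simp
  then obtain y where y: "y \<in> cspan (range v)" "dist y f < sqrt r"
    using closure_approachable \<open>r > 0\<close> by (metis real_sqrt_gt_0_iff)
  obtain M where M: "y \<in> cspan (v ` {..<M})"
    using cspan_range_subset_initial_segment[OF y(1)] by blast
  have "norm ((\<Sum>k<n. (cmod (cinner f (v k)))\<^sup>2) - (norm f)\<^sup>2) < r" if "n \<ge> M" for n
  proof -
    let ?P = "orthonormal_proj (v ` {..<n})"
    have "cspan (v ` {..<M}) \<subseteq> cspan (v ` {..<n})"
      using \<open>n \<ge> M\<close> by (intro cvs.span_mono image_mono) auto
    then have "y \<in> cspan (v ` {..<n})"
      using M by blast
    then have "norm (f - ?P f) < sqrt r"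
      using orthonormal_proj_best[OF _ corthonormal_image, of "{..<n}" y f] y(2)
      by (simp add: dist_norm norm_minus_commute)
    then have "(norm (f - ?P f))\<^sup>2 < r"
      using power_strict_mono[OF _ norm_ge_zero, of _ "sqrt r" 2] \<open>r > 0\<close> by simp
    moreover have "(norm f)\<^sup>2 = (norm (f - ?P f))\<^sup>2 + (\<Sum>k<n. (cmod (cinner f (v k)))\<^sup>2)"
      using norm_square_orthonormal_proj_split[OF _ corthonormal_image, of "{..<n}" f]
        norm_orthonormal_proj_image_square[of "{..<n}" f] by simp
    ultimately show ?thesis
      by simp
  qed
  then show "\<exists>n0. \<forall>n\<ge>n0. norm ((\<Sum>k<n. (cmod (cinner f (v k)))\<^sup>2) - (norm f)\<^sup>2) < r"
    by blast
qed

lemma orthonormal_basis_residual_tendsto_zero: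
  "(\<lambda>M. (norm (f - (\<Sum>k<M. cinner f (v k) *\<^sub>C v k)))\<^sup>2) \<longlonglongrightarrow> 0"
proof -
  have "(norm (f - (\<Sum>k<M. cinner f (v k) *\<^sub>C v k)))\<^sup>2 = (norm f)\<^sup>2 - (\<Sum>k<M. (cmod (cinner f (v k)))\<^sup>2)"
    for M
    using norm_square_orthonormal_proj_split[OF _ corthonormal_image, of "{..<M}" f]
      norm_orthonormal_proj_image_square[of "{..<M}" f] orthonormal_proj_image[of "{..<M}" f] by simp
  moreover have "(\<lambda>M. (norm f)\<^sup>2 - (\<Sum>k<M. (cmod (cinner f (v k)))\<^sup>2)) \<longlonglongrightarrow> 0"
    using tendsto_diff[OF tendsto_const[of "(norm f)\<^sup>2"] parseval_sums[of f, unfolded sums_def]] by simp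
  ultimately show ?thesis
    by simp
qed

lemma orthonormal_basis_residual_small:
  assumes "\<epsilon> > 0"
  obtains M where "M \<ge> M0" "(norm (f - (\<Sum>k<M. cinner f (v k) *\<^sub>C v k)))\<^sup>2 < \<epsilon>"
proof -
  have "eventually (\<lambda>M. (norm (f - (\<Sum>k<M. cinner f (v k) *\<^sub>C v k)))\<^sup>2 < \<epsilon> \<and> M \<ge> M0) sequentially"
    using order_tendstoD(2)[OF orthonormal_basis_residual_tendsto_zero assms] eventually_ge_at_top
      eventually_conj by blast
  then obtain M1 where "\<forall>M\<ge>M1. (norm (f - (\<Sum>k<M. cinner f (v k) *\<^sub>C v k)))\<^sup>2 < \<epsilon> \<and> M \<ge> M0"
    unfolding eventually_sequentially by blast
  then show ?thesis
    using that by blast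
qed

end

section \<open>Replacing the first N basis vectors\<close>

text \<open>
  The family mixed is B_N, cspan V is H'_N and P is p'_N; indices start at 0, so w_0, ..., w_(N-1)
  replace v_0, ..., v_(N-1).
\<close>

locale onb_perturbation =
  fixes v w :: "nat \<Rightarrow> 'a::complex_inner" and N :: nat
  assumes onb: "orthonormal_basis v" and unit: "\<And>j. norm (w j) = 1"
begin

abbreviation "V \<equiv> v ` {..<N}"
abbreviation "P \<equiv> orthonormal_proj V"
abbreviation "mixed \<equiv> \<lambda>j. if j < N then w j else v j"

lemma corthonormal_V: "corthonormal V"
  by (rule corthonormal_image[OF onb])

lemma proj_tail_eq_zero: "N \<le> k \<Longrightarrow> P (v k) = 0"
  by (simp add: orthonormal_proj_image[OF onb] orthonormal_basis_cinner[OF onb])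

lemma frame_sums:
  "(\<lambda>j. (cmod (cinner f (mixed j)))\<^sup>2) sums
     ((\<Sum>j<N. (cmod (cinner f (w j)))\<^sup>2) + (norm (f - P f))\<^sup>2)"
proof -
  have "(norm f)\<^sup>2 = (norm (f - P f))\<^sup>2 + (\<Sum>k<N. (cmod (cinner f (v k)))\<^sup>2)"
    using norm_square_orthonormal_proj_split[OF _ corthonormal_V, of f]
      norm_orthonormal_proj_image_square[OF onb, of "{..<N}" f] by simp
  then have "(\<lambda>j. (cmod (cinner f (v (j + N))))\<^sup>2) sums (norm (f - P f))\<^sup>2"
    using sums_iff_shift[of "\<lambda>k. (cmod (cinner f (v k)))\<^sup>2" N] parseval_sums[OF onb, of f] by simp
  then have "(\<lambda>j. (cmod (cinner f (mixed (j + N))))\<^sup>2) sums (norm (f - P f))\<^sup>2"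
    by simp
  then show ?thesis
    by (subst (asm) sums_iff_shift) (simp add: add.commute)
qed

lemma frame_upper_estimate:
  "(\<Sum>j<N. (cmod (cinner f (w j)))\<^sup>2) + (norm (f - P f))\<^sup>2 \<le> (real N + 1) * (norm f)\<^sup>2"
proof -
  have "(cmod (cinner f (w j)))\<^sup>2 \<le> (norm f)\<^sup>2" for j
    using cinner_cauchy_schwarz[of f "w j"] unit[of j] by (simp add: power_mono)
  then have "(\<Sum>j<N. (cmod (cinner f (w j)))\<^sup>2) \<le> real N * (norm f)\<^sup>2"
    using sum_mono[of "{..<N}" "\<lambda>j. (cmod (cinner f (w j)))\<^sup>2" "\<lambda>_. (norm f)\<^sup>2"] by simp
  moreover have "(norm (f - P f))\<^sup>2 \<le> (norm f)\<^sup>2"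
    using norm_square_orthonormal_proj_split[OF _ corthonormal_V, of f] by simp
  ultimately show ?thesis
    by (simp add: distrib_right del: power_mono_iff)
qed

lemma cinner_proj_proj_square_le:
  "(cmod (cinner (P f) (P (w j))))\<^sup>2 \<le> 2 * (cmod (cinner f (w j)))\<^sup>2 + 2 * (norm (f - P f))\<^sup>2"
proof -
  have "cinner (P f) (P (w j)) = cinner f (w j) - cinner (f - P f) (w j)"
    using cinner_orthonormal_proj_right[OF _ corthonormal_V orthonormal_proj_in_cspan]
    by (simp add: cinner_diff_left)
  then have "cmod (cinner (P f) (P (w j))) \<le> cmod (cinner f (w j)) + norm (f - P f)"
    using norm_triangle_ineq4[of "cinner f (w j)" "cinner (f - P f) (w j)"]
      cinner_cauchy_schwarz[of "f - P f" "w j"] unit[of j] by simp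
  then have "(cmod (cinner (P f) (P (w j))))\<^sup>2 \<le> (cmod (cinner f (w j)) + norm (f - P f))\<^sup>2"
    by (rule power_mono) simp
  also have "\<dots> \<le> 2 * (cmod (cinner f (w j)))\<^sup>2 + 2 * (norm (f - P f))\<^sup>2"
    by (rule sum_square_le_twice)
  finally show ?thesis .
qed

lemma frame_lower_estimate:
  assumes "cspan ((\<lambda>j. P (w j)) ` {..<N}) = cspan V"
  obtains K where "K \<ge> 1"
    "\<And>f. (norm f)\<^sup>2 \<le> K * ((\<Sum>j<N. (cmod (cinner f (w j)))\<^sup>2) + (norm (f - P f))\<^sup>2)"
proof -
  obtain C where C: "C > 0" and
    bound: "\<And>g. g \<in> cspan V \<Longrightarrow> (norm g)\<^sup>2 \<le> C * (\<Sum>j<N. (cmod (cinner g (P (w j))))\<^sup>2)"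
    using finite_family_frame_lower_bound[of "{..<N}" "\<lambda>j. P (w j)"] assms by auto
  have "(norm f)\<^sup>2 \<le> (1 + 2 * C + 2 * C * N) * ((\<Sum>j<N. (cmod (cinner f (w j)))\<^sup>2) + (norm (f - P f))\<^sup>2)"
    for f
  proof -
    define S where "S = (\<Sum>j<N. (cmod (cinner f (w j)))\<^sup>2)"
    define t where "t = norm (f - P f)"
    have "(\<Sum>j<N. (cmod (cinner (P f) (P (w j))))\<^sup>2) \<le> (\<Sum>j<N. 2 * (cmod (cinner f (w j)))\<^sup>2 + 2 * t\<^sup>2)"
      unfolding t_def by (rule sum_mono) (rule cinner_proj_proj_square_le)
    also have "\<dots> = 2 * S + 2 * N * t\<^sup>2"
      by (simp add: S_def sum.distrib sum_distrib_left)
    finally have "(norm (P f))\<^sup>2 \<le> C * (2 * S + 2 * N * t\<^sup>2)"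
      using bound[OF orthonormal_proj_in_cspan] C by (meson mult_left_mono less_imp_le order_trans)
    moreover have "(norm f)\<^sup>2 = t\<^sup>2 + (norm (P f))\<^sup>2"
      unfolding t_def by (rule norm_square_orthonormal_proj_split[OF _ corthonormal_V]) simp
    moreover have "S \<ge> 0" "C * t\<^sup>2 \<ge> 0" "C * N * S \<ge> 0"
      using C by (simp_all add: S_def sum_nonneg)
    ultimately show ?thesis
      unfolding S_def[symmetric] t_def[symmetric] by (simp add: algebra_simps)
  qed
  moreover have "1 + 2 * C + 2 * C * N \<ge> 1"
    using C by simp
  ultimately show ?thesis
    using that by blast
qed

lemma cspan_proj_if_frame:
  assumes "is_frame mixed"
  shows "cspan ((\<lambda>j. P (w j)) ` {..<N}) = cspan V"
proof (rule ccontr)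
  assume "cspan ((\<lambda>j. P (w j)) ` {..<N}) \<noteq> cspan V"
  moreover have sub: "(\<lambda>j. P (w j)) ` {..<N} \<subseteq> cspan V"
    using orthonormal_proj_in_cspan by blast
  ultimately obtain e where e: "e \<in> V" "e \<notin> cspan ((\<lambda>j. P (w j)) ` {..<N})"
    using cvs.span_eq[of "(\<lambda>j. P (w j)) ` {..<N}" V] cvs.span_superset by blast
  obtain g where g: "g \<noteq> 0" "g \<in> cspan (insert e ((\<lambda>j. P (w j)) ` {..<N}))"
    and orth: "\<And>x. x \<in> (\<lambda>j. P (w j)) ` {..<N} \<Longrightarrow> cinner g x = 0"
    by (rule exists_orthogonal_in_cspan_insert[OF finite_imageI[OF finite_lessThan] e(2)]) blast
  have "cspan (insert e ((\<lambda>j. P (w j)) ` {..<N})) \<subseteq> cspan V"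
    using sub e(1) cvs.span_base[of e V] by (intro cvs.span_minimal cvs.subspace_span) auto
  then have gV: "g \<in> cspan V"
    using g(2) by blast
  have "cinner g (w j) = 0" if "j < N" for j
    using orth[of "P (w j)"] that cinner_orthonormal_proj_right[OF _ corthonormal_V gV] by simp
  moreover have "g - P g = 0"
    using orthonormal_proj_eq_self[OF _ corthonormal_V gV] by simp
  ultimately have "(\<lambda>j. (cmod (cinner g (mixed j)))\<^sup>2) sums 0"
    using frame_sums[of g] by simp
  moreover obtain A where "A > 0" "A * (norm g)\<^sup>2 \<le> (\<Sum>j. (cmod (cinner g (mixed j)))\<^sup>2)"
    using assms unfolding is_frame_def by blast
  ultimately show False
    using g(1) by (auto simp: sums_iff mult_le_0_iff)
qed

lemma frame_if_cspan_proj: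
  assumes "cspan ((\<lambda>j. P (w j)) ` {..<N}) = cspan V"
  shows "is_frame mixed"
proof -
  obtain K where K: "K \<ge> 1"
    "\<And>f. (norm f)\<^sup>2 \<le> K * ((\<Sum>j<N. (cmod (cinner f (w j)))\<^sup>2) + (norm (f - P f))\<^sup>2)"
    using frame_lower_estimate[OF assms] by blast
  have "1 / K * (norm f)\<^sup>2 \<le> (\<Sum>j<N. (cmod (cinner f (w j)))\<^sup>2) + (norm (f - P f))\<^sup>2" for f
    using K(2)[of f] K(1) by (simp add: field_simps)
  moreover have "1 / K \<le> real N + 1"
    using K(1) order_trans[of "1 / K" 1 "real N + 1"] by simp
  ultimately show "is_frame mixed"
    unfolding is_frame_def using K(1) frame_sums frame_upper_estimate
    by (intro exI[of _ "1 / K"] exI[of _ "real N + 1"]) (auto simp: sums_iff)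
qed

lemma lincomb_mixed_split:
  assumes "finite J"
  shows "(\<Sum>j\<in>J. a j *\<^sub>C mixed j) = (\<Sum>j\<in>J \<inter> {..<N}. a j *\<^sub>C w j) + (\<Sum>j\<in>J - {..<N}. a j *\<^sub>C v j)"
  using sum.Int_Diff[OF assms, of "\<lambda>j. a j *\<^sub>C mixed j" "{..<N}"] by simp

lemma norm_lincomb_head_square_le:
  "(norm (\<Sum>j\<in>J \<inter> {..<N}. a j *\<^sub>C w j))\<^sup>2 \<le> N * (\<Sum>j\<in>J \<inter> {..<N}. (cmod (a j))\<^sup>2)"
proof -
  have "card (J \<inter> {..<N}) \<le> N"
    using card_mono[of "{..<N}" "J \<inter> {..<N}"] by simp
  then have "card (J \<inter> {..<N}) * (\<Sum>j\<in>J \<inter> {..<N}. (cmod (a j))\<^sup>2) \<le> N * (\<Sum>j\<in>J \<inter> {..<N}. (cmod (a j))\<^sup>2)"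
    by (intro mult_right_mono) (simp_all add: sum_nonneg)
  then show ?thesis
    using norm_sum_unit_square_le[of "J \<inter> {..<N}" w a] unit by simp
qed

lemma riesz_upper_estimate:
  assumes "finite J"
  shows "(norm (\<Sum>j\<in>J. a j *\<^sub>C mixed j))\<^sup>2 \<le> 2 * (real N + 1) * (\<Sum>j\<in>J. (cmod (a j))\<^sup>2)"
proof -
  define S1 where "S1 = (\<Sum>j\<in>J \<inter> {..<N}. (cmod (a j))\<^sup>2)"
  define S2 where "S2 = (\<Sum>j\<in>J - {..<N}. (cmod (a j))\<^sup>2)"
  have "(norm (\<Sum>j\<in>J. a j *\<^sub>C mixed j))\<^sup>2
      \<le> 2 * (norm (\<Sum>j\<in>J \<inter> {..<N}. a j *\<^sub>C w j))\<^sup>2 + 2 * (norm (\<Sum>j\<in>J - {..<N}. a j *\<^sub>C v j))\<^sup>2"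
    unfolding lincomb_mixed_split[OF assms] by (rule norm_add_square_le)
  also have "\<dots> \<le> 2 * (N * S1) + 2 * S2"
    using norm_lincomb_head_square_le[where J = J and a = a] assms
    by (simp add: S1_def S2_def norm_lincomb_orthonormal_basis_square[OF onb])
  also have "\<dots> \<le> 2 * (real N + 1) * (S1 + S2)"
    by (simp add: algebra_simps S1_def S2_def sum_nonneg)
  also have "S1 + S2 = (\<Sum>j\<in>J. (cmod (a j))\<^sup>2)"
    unfolding S1_def S2_def using sum.Int_Diff[OF assms] by metis
  finally show ?thesis .
qed

lemma proj_lincomb_mixed:
  assumes "finite J"
  shows "P (\<Sum>j\<in>J. a j *\<^sub>C mixed j) = (\<Sum>j<N. (if j \<in> J then a j else 0) *\<^sub>C P (w j))"
proof -
  have "P (\<Sum>j\<in>J. a j *\<^sub>C mixed j) = (\<Sum>j\<in>J. a j *\<^sub>C P (mixed j))"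
    by (rule orthonormal_proj_lincomb)
  also have "\<dots> = (\<Sum>j\<in>J \<inter> {..<N}. a j *\<^sub>C P (w j))"
    using sum.Int_Diff[OF assms, of "\<lambda>j. a j *\<^sub>C P (mixed j)" "{..<N}"]
    by (simp add: proj_tail_eq_zero)
  also have "\<dots> = (\<Sum>j<N. (if j \<in> J then a j else 0) *\<^sub>C P (w j))"
    by (simp add: if_distrib[of "\<lambda>c. c *\<^sub>C _"] sum.If_cases Int_commute cong: if_cong)
  finally show ?thesis .
qed

lemma head_coefficients_square_le:
  assumes bound: "\<And>c. (\<Sum>j<N. (cmod (c j))\<^sup>2) \<le> C * (norm (\<Sum>j<N. c j *\<^sub>C P (w j)))\<^sup>2"
    and "C \<ge> 0" and J: "finite J"
  shows "(\<Sum>j\<in>J \<inter> {..<N}. (cmod (a j))\<^sup>2) \<le> C * (norm (\<Sum>j\<in>J. a j *\<^sub>C mixed j))\<^sup>2"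
proof -
  let ?x = "\<Sum>j\<in>J. a j *\<^sub>C mixed j"
  have "(\<Sum>j\<in>J \<inter> {..<N}. (cmod (a j))\<^sup>2) = (\<Sum>j<N. (cmod (if j \<in> J then a j else 0))\<^sup>2)"
    by (simp add: if_distrib[of "\<lambda>c. (cmod c)\<^sup>2"] sum.If_cases Int_commute cong: if_cong)
  also have "\<dots> \<le> C * (norm (P ?x))\<^sup>2"
    unfolding proj_lincomb_mixed[OF J] by (rule bound)
  also have "\<dots> \<le> C * (norm ?x)\<^sup>2"
    using norm_square_orthonormal_proj_split[OF _ corthonormal_V, of ?x] \<open>C \<ge> 0\<close>
    by (simp add: mult_left_mono)
  finally show ?thesis .
qed

lemma tail_coefficients_square_le:
  assumes J: "finite J"
  shows "(\<Sum>j\<in>J - {..<N}. (cmod (a j))\<^sup>2)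
    \<le> 2 * (norm (\<Sum>j\<in>J. a j *\<^sub>C mixed j))\<^sup>2 + 2 * (N * (\<Sum>j\<in>J \<inter> {..<N}. (cmod (a j))\<^sup>2))"
proof -
  define x where "x = (\<Sum>j\<in>J. a j *\<^sub>C mixed j)"
  define X where "X = (\<Sum>j\<in>J \<inter> {..<N}. a j *\<^sub>C w j)"
  have "(\<Sum>j\<in>J - {..<N}. (cmod (a j))\<^sup>2) = (norm (x - X))\<^sup>2"
    unfolding x_def X_def lincomb_mixed_split[OF J]
    by (simp add: norm_lincomb_orthonormal_basis_square[OF onb] J)
  also have "\<dots> \<le> 2 * (norm x)\<^sup>2 + 2 * (norm X)\<^sup>2"
    using norm_add_square_le[of x "- X"] by simp
  also have "\<dots> \<le> 2 * (norm x)\<^sup>2 + 2 * (N * (\<Sum>j\<in>J \<inter> {..<N}. (cmod (a j))\<^sup>2))"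
    unfolding X_def using norm_lincomb_head_square_le[where J = J and a = a] by simp
  finally show ?thesis
    unfolding x_def .
qed

lemma riesz_lower_estimate:
  assumes "inj_on (\<lambda>j. P (w j)) {..<N}" and "cindependent ((\<lambda>j. P (w j)) ` {..<N})"
  obtains K where "K \<ge> 1"
    "\<And>J a. finite J \<Longrightarrow> (\<Sum>j\<in>J. (cmod (a j))\<^sup>2) \<le> K * (norm (\<Sum>j\<in>J. a j *\<^sub>C mixed j))\<^sup>2"
proof -
  obtain C where C: "C > 0" and
    bound: "\<And>c. (\<Sum>j<N. (cmod (c j))\<^sup>2) \<le> C * (norm (\<Sum>j<N. c j *\<^sub>C P (w j)))\<^sup>2"
    using finite_family_riesz_lower_bound[OF finite_lessThan assms] by blast
  have "(\<Sum>j\<in>J. (cmod (a j))\<^sup>2) \<le> (C + 2 + 2 * N * C) * (norm (\<Sum>j\<in>J. a j *\<^sub>C mixed j))\<^sup>2"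
    if J: "finite J" for J a
  proof -
    let ?n = "(norm (\<Sum>j\<in>J. a j *\<^sub>C mixed j))\<^sup>2"
    let ?S1 = "\<Sum>j\<in>J \<inter> {..<N}. (cmod (a j))\<^sup>2"
    have S1: "?S1 \<le> C * ?n"
      using head_coefficients_square_le[OF bound _ J] C by simp
    then have "N * ?S1 \<le> N * (C * ?n)"
      by (rule mult_left_mono) simp
    moreover have "(\<Sum>j\<in>J. (cmod (a j))\<^sup>2) = ?S1 + (\<Sum>j\<in>J - {..<N}. (cmod (a j))\<^sup>2)"
      using sum.Int_Diff[OF J] by metis
    moreover have "(C + 2 + 2 * N * C) * ?n = C * ?n + 2 * ?n + 2 * (N * (C * ?n))"
      by (simp add: algebra_simps)
    ultimately show ?thesis
      using S1 tail_coefficients_square_le[OF J, of a] by linarith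
  qed
  moreover have "C + 2 + 2 * N * C \<ge> 1"
    using C by simp
  ultimately show ?thesis
    using that by blast
qed

lemma lincomb_mixed_eq_residual:
  assumes "X = (\<Sum>j<N. a j *\<^sub>C w j)" and "\<And>k. k < N \<Longrightarrow> cinner X (v k) = 0" and "N \<le> M"
  shows "(\<Sum>j<M. (if j < N then a j else - cinner X (v j)) *\<^sub>C mixed j)
    = X - (\<Sum>k<M. cinner X (v k) *\<^sub>C v k)"
proof -
  have split: "{..<M} \<inter> {..<N} = {..<N}"
    using assms(3) by auto
  have "(\<Sum>j<M. (if j < N then a j else - cinner X (v j)) *\<^sub>C mixed j)
      = X - (\<Sum>k\<in>{..<M} - {..<N}. cinner X (v k) *\<^sub>C v k)"
    using sum.Int_Diff[of "{..<M}" "\<lambda>j. (if j < N then a j else - cinner X (v j)) *\<^sub>C mixed j" "{..<N}"]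
    by (simp add: assms(1) split cvs.scale_minus_left sum_negf)
  moreover have "(\<Sum>k<M. cinner X (v k) *\<^sub>C v k) = (\<Sum>k\<in>{..<M} - {..<N}. cinner X (v k) *\<^sub>C v k)"
    using sum.Int_Diff[of "{..<M}" "\<lambda>k. cinner X (v k) *\<^sub>C v k" "{..<N}"] assms(2)
    by (simp add: split cvs.scale_zero_left)
  ultimately show ?thesis
    by simp
qed

lemma independent_if_riesz_sequence:
  assumes "is_riesz_sequence mixed"
  shows "inj_on (\<lambda>j. P (w j)) {..<N} \<and> cindependent ((\<lambda>j. P (w j)) ` {..<N})"
proof (rule ccontr)
  obtain A where A: "A > 0"
    "\<And>J a. finite J \<Longrightarrow> A * (\<Sum>j\<in>J. (cmod (a j))\<^sup>2) \<le> (norm (\<Sum>j\<in>J. a j *\<^sub>C mixed j))\<^sup>2"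
    using assms unfolding is_riesz_sequence_def by blast
  assume "\<not> ?thesis"
  then obtain a i where i: "i < N" "a i \<noteq> 0" and dep: "(\<Sum>j<N. a j *\<^sub>C P (w j)) = 0"
    using inj_independent_iff_lincomb_eq_zero[OF finite_lessThan] by blast
  define X where "X = (\<Sum>j<N. a j *\<^sub>C w j)"
  have "P X = 0"
    unfolding X_def orthonormal_proj_lincomb by (rule dep)
  then have head: "cinner X (v k) = 0" if "k < N" for k
    using cinner_orthonormal_proj[OF _ corthonormal_V, of "v k" X] that by simp
  \<comment> \<open>Truncated expansions of X are combinations of the family with coefficient a i at i.\<close>
  obtain M where M: "M \<ge> N" "(norm (X - (\<Sum>k<M. cinner X (v k) *\<^sub>C v k)))\<^sup>2 < A * (cmod (a i))\<^sup>2"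
    using orthonormal_basis_residual_small[OF onb] A(1) i(2) by (metis zero_less_norm_iff
        mult_pos_pos zero_less_power)
  define b where "b j = (if j < N then a j else - cinner X (v j))" for j
  have "(cmod (a i))\<^sup>2 \<le> (\<Sum>j<M. (cmod (b j))\<^sup>2)"
    using member_le_sum[of i "{..<M}" "\<lambda>j. (cmod (b j))\<^sup>2"] i M(1) by (simp add: b_def)
  then have "A * (cmod (a i))\<^sup>2 \<le> (norm (\<Sum>j<M. b j *\<^sub>C mixed j))\<^sup>2"
    using A mult_left_mono[of _ _ A] by (meson finite_lessThan less_imp_le order_trans)
  also have "(\<Sum>j<M. b j *\<^sub>C mixed j) = X - (\<Sum>k<M. cinner X (v k) *\<^sub>C v k)"
    unfolding b_def by (rule lincomb_mixed_eq_residual[OF X_def head M(1)])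
  finally show False
    using M(2) by simp
qed

lemma riesz_sequence_if_independent:
  assumes "inj_on (\<lambda>j. P (w j)) {..<N}" and "cindependent ((\<lambda>j. P (w j)) ` {..<N})"
  shows "is_riesz_sequence mixed"
proof -
  obtain K where K: "K \<ge> 1"
    "\<And>J a. finite J \<Longrightarrow> (\<Sum>j\<in>J. (cmod (a j))\<^sup>2) \<le> K * (norm (\<Sum>j\<in>J. a j *\<^sub>C mixed j))\<^sup>2"
    using riesz_lower_estimate[OF assms] by blast
  have "1 / K * (\<Sum>j\<in>J. (cmod (a j))\<^sup>2) \<le> (norm (\<Sum>j\<in>J. a j *\<^sub>C mixed j))\<^sup>2" if "finite J" for J a
    using K(2)[OF that, of a] K(1) by (simp add: field_simps)
  moreover have "1 / K \<le> 2 * (real N + 1)"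
    using K(1) order_trans[of "1 / K" 1 "2 * (real N + 1)"] by simp
  ultimately show ?thesis
    unfolding is_riesz_sequence_def using K(1) riesz_upper_estimate
    by (intro exI[of _ "1 / K"] exI[of _ "2 * (real N + 1)"]) auto
qed

lemma cspan_proj_iff_independent:
  "cspan ((\<lambda>j. P (w j)) ` {..<N}) = cspan V \<longleftrightarrow>
    inj_on (\<lambda>j. P (w j)) {..<N} \<and> cindependent ((\<lambda>j. P (w j)) ` {..<N})"
  using corthonormal_independent[OF _ corthonormal_V] orthonormal_proj_in_cspan
    card_image[OF inj_on_subset[OF orthonormal_basis_inj[OF onb]], of "{..<N}"]
  by (intro cspan_eq_iff_inj_independent) auto

end

theorem mainTheorem1:
  fixes v w :: "nat \<Rightarrow> 'a::complex_hilbert" and N :: nat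
  assumes sep: "separable_space (euclidean :: 'a topology)"
    and onb: "orthonormal_basis v"
    and unit: "\<And>j. norm (w j) = 1"
    and N: "N \<ge> 1"
  defines "B \<equiv> (\<lambda>j. if j < N then w j else v j)"
    and "H' \<equiv> cspan (v ` {..<N})"
  defines "p \<equiv> orth_proj H'"
  shows "(is_frame B \<longleftrightarrow> cspan ((\<lambda>j. p (w j)) ` {..<N}) = H') \<and>
         (is_frame B \<longleftrightarrow> inj_on (\<lambda>j. p (w j)) {..<N} \<and> cindependent ((\<lambda>j. p (w j)) ` {..<N})) \<and>
         (is_frame B \<longleftrightarrow> is_riesz_sequence B) \<and>
         (is_frame B \<longleftrightarrow> is_riesz_basis B)"
proof -
  interpret onb_perturbation v w N
    using onb unit by unfold_locales
  have p: "p = P"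
    unfolding p_def H'_def by (rule orth_proj_cspan[OF finite_imageI[OF finite_lessThan] corthonormal_V])
  have "is_frame B \<longleftrightarrow> cspan ((\<lambda>j. p (w j)) ` {..<N}) = H'"
    unfolding B_def p H'_def using cspan_proj_if_frame frame_if_cspan_proj by blast
  moreover have "is_riesz_sequence B \<longleftrightarrow>
      inj_on (\<lambda>j. p (w j)) {..<N} \<and> cindependent ((\<lambda>j. p (w j)) ` {..<N})"
    unfolding B_def p using independent_if_riesz_sequence riesz_sequence_if_independent by blast
  moreover have "cspan ((\<lambda>j. p (w j)) ` {..<N}) = H' \<longleftrightarrow>
      inj_on (\<lambda>j. p (w j)) {..<N} \<and> cindependent ((\<lambda>j. p (w j)) ` {..<N})"
    unfolding p H'_def by (rule cspan_proj_iff_independent)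
  ultimately show ?thesis
    unfolding is_riesz_basis_def by blast
qed

end
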